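(* Let $G$ be a finite non-abelian group and $C\le G$ a subgroup such that: $C=\langle c\rangle$ is cyclic of order a power of a prime $r$; $C$ is characteristic in $G$; $C\cap Z(G)=\{1\}$; and some $a\in G$ induces by conjugation on $C$ an automorphism whose order is not a power of $r$. Let $\gamma$ be a gamma function on $G$ and suppose there is a function $\sigma:C\to C$ with $\gamma(x)=\iota\big((x^{\sigma})^{-1}\big)$ for every $x\in C$. Then either $\gamma(x)=1$ for all $x\in C$ (i.e. $C\le\ker(\gamma)$), or $\gamma(x)=\iota(x^{-1})$ for all $x\in C$, in which case $C\le\ker(\tilde\gamma)$, where $\tilde\gamma(x)=\gamma(x^{-1})\iota(x^{-1})$.
   Context: Maps act on the right, written exponentially; $\iota(g)\in\mathrm{Aut}(G)$ is $x\mapsto g^{-1}xg$. A gamma function on $G$ is a map $\gamma:G\to\mathrm{Aut}(G)$ with $\gamma(g^{\gamma(h)}h)=\gamma(g)\gamma(h)$ for all $g,h\in G$; $\ker(\gamma)=\{g:\gamma(g)=1\}$. The map $\tilde\gamma$ is again a gamma function. *)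

theory Defs
  imports "HOL-Algebra.Algebra"
begin

text \<open>Maps act on the right. The right-action product
  phi psi (first phi, then psi) is compose (carrier G) psi phi.\<close>

definition conj_aut :: "('a, 'b) monoid_scheme \<Rightarrow> 'a \<Rightarrow> ('a \<Rightarrow> 'a)" where
  "conj_aut G g = (\<lambda>x \<in> carrier G. inv\<^bsub>G\<^esub> g \<otimes>\<^bsub>G\<^esub> x \<otimes>\<^bsub>G\<^esub> g)"

definition id_aut :: "('a, 'b) monoid_scheme \<Rightarrow> ('a \<Rightarrow> 'a)" where
  "id_aut G = (\<lambda>x \<in> carrier G. x)"

definition aut_mult :: "('a, 'b) monoid_scheme \<Rightarrow> ('a \<Rightarrow> 'a) \<Rightarrow> ('a \<Rightarrow> 'a) \<Rightarrow> ('a \<Rightarrow> 'a)" where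
  "aut_mult G phi psi = compose (carrier G) psi phi"

definition gamma_function :: "('a, 'b) monoid_scheme \<Rightarrow> ('a \<Rightarrow> ('a \<Rightarrow> 'a)) \<Rightarrow> bool" where
  "gamma_function G \<gamma> \<longleftrightarrow>
     (\<forall>g \<in> carrier G. \<gamma> g \<in> auto G) \<and>
     (\<forall>g \<in> carrier G. \<forall>h \<in> carrier G.
        \<gamma> (\<gamma> h g \<otimes>\<^bsub>G\<^esub> h) = aut_mult G (\<gamma> g) (\<gamma> h))"

definition gamma_tilde :: "('a, 'b) monoid_scheme \<Rightarrow> ('a \<Rightarrow> ('a \<Rightarrow> 'a)) \<Rightarrow> 'a \<Rightarrow> ('a \<Rightarrow> 'a)" where
  "gamma_tilde G \<gamma> x = aut_mult G (\<gamma> (inv\<^bsub>G\<^esub> x)) (conj_aut G (inv\<^bsub>G\<^esub> x))"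

definition group_center :: "('a, 'b) monoid_scheme \<Rightarrow> 'a set" where
  "group_center G = {z \<in> carrier G. \<forall>x \<in> carrier G. z \<otimes>\<^bsub>G\<^esub> x = x \<otimes>\<^bsub>G\<^esub> z}"

definition characteristic :: "('a, 'b) monoid_scheme \<Rightarrow> 'a set \<Rightarrow> bool" where
  "characteristic G H \<longleftrightarrow> subgroup H G \<and> (\<forall>\<phi> \<in> auto G. \<phi> ` H = H)"

end

theory Submission
  imports Defs "HOL-Computational_Algebra.Primes"
begin

(*
  For x in C the automorphism gamma(x) is inner, namely iota(sigma(x)^-1), and since
  C meets the centre trivially, iota is injective on C; so identities between the
  gamma(x) descend to sigma. As C is abelian, gamma(y) fixes every x in C, and the gamma
  identity makes sigma an endomorphism of the cyclic group C: sigma(x) = x^m.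

  Conjugation by a has no nontrivial fixed point on C = <c> of order r^k: if it maps
  c to c^t and fixes some c^j <> 1, then t = 1 (mod r), hence t^(r^k) = 1 (mod r^(k+1)),
  and its order on C would be a power of r.

  Given x in C, put y = x^m and choose x' in C with gamma(a)(x') = y a y^-1 x a^-1,
  so that gamma(x)(a) x = gamma(a)(x') a. The gamma identity turns both sides into the
  same automorphism and yields y = gamma(a)(x')^m; unfolding this, y^-m y is fixed by
  conjugation by a, so y^m = y. Thus m^2 = m (mod r^k), i.e. m = 0 or m = 1 (mod r^k),
  which are the two alternatives.
*)

lemma power_dvd_power_power_sub_one:
  fixes t :: int and r :: nat
  assumes "int r dvd t - 1"
  shows "int r ^ Suc i dvd t ^ (r ^ i) - 1"
proof (induction i)
  case 0
  then show ?case using assms by simp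
next
  case (Suc i)
  define x where "x = t ^ (r ^ i)"
  have IH: "int r ^ Suc i dvd x - 1"
    using Suc x_def by simp
  then have "int r dvd x - 1"
    by (metis dvd_mult_left power_Suc)
  then have "int r dvd x ^ l - 1" for l
    by (metis dvd_mult2 power_diff_1_eq)
  then have "int r dvd (\<Sum>l<r. x ^ l - 1) + int r"
    by (intro dvd_add dvd_sum) auto
  then have "int r dvd (\<Sum>l<r. x ^ l)"
    by (simp add: sum_subtractf)
  with IH have "int r ^ Suc i * int r dvd (x - 1) * (\<Sum>l<r. x ^ l)"
    by (rule mult_dvd_mono)
  moreover have "(x - 1) * (\<Sum>l<r. x ^ l) = t ^ (r ^ Suc i) - 1"
  proof -
    have "t ^ (r ^ Suc i) = x ^ r"
      unfolding x_def by (simp only: power_Suc2 power_mult)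
    then show ?thesis
      using power_diff_1_eq[of x r] by simp
  qed
  ultimately show ?case
    by (simp add: mult.commute)
qed

lemma prime_power_dvd_consecutive_product:
  fixes m :: int and r k :: nat
  assumes "Factorial_Ring.prime r" and "int r ^ k dvd m * (m - 1)"
  shows "int r ^ k dvd m \<or> int r ^ k dvd m - 1"
proof -
  have prime: "Factorial_Ring.prime (int r)"
    using assms(1) by simp
  have "\<not> int r dvd m \<or> \<not> int r dvd m - 1"
    using prime not_prime_unit dvd_diff[of "int r" m "m - 1"] by auto
  then show ?thesis
    using assms(2) prime
    by (auto simp: prime_imp_coprime coprime_dvd_mult_left_iff coprime_dvd_mult_right_iff)
qed

context group
begin

lemma m_inv_cancel_left [simp]: "x \<in> carrier G \<Longrightarrow> y \<in> carrier G \<Longrightarrow> x \<otimes> (inv x \<otimes> y) = y"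
  by (simp add: m_assoc[symmetric])

lemma inv_m_cancel_left [simp]: "x \<in> carrier G \<Longrightarrow> y \<in> carrier G \<Longrightarrow> inv x \<otimes> (x \<otimes> y) = y"
  by (simp add: m_assoc[symmetric])

lemma conj_aut_compose:
  assumes "a \<in> carrier G" "b \<in> carrier G"
  shows "compose (carrier G) (conj_aut G b) (conj_aut G a) = conj_aut G (a \<otimes> b)"
  using assms by (auto simp: conj_aut_def compose_def inv_mult_group m_assoc fun_eq_iff)

lemma conj_aut_one: "conj_aut G \<one> = id_aut G"
  by (auto simp: conj_aut_def id_aut_def)

lemma conj_aut_in_auto:
  assumes g: "g \<in> carrier G"
  shows "conj_aut G g \<in> auto G"
proof -
  have "conj_aut G g \<in> hom G G"
    using g by (intro homI) (simp_all add: conj_aut_def m_assoc)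
  moreover have "bij_betw (conj_aut G g) (carrier G) (carrier G)"
  proof (rule bij_betw_byWitness[where f' = "conj_aut G (inv g)"])
    show "\<forall>x\<in>carrier G. conj_aut G (inv g) (conj_aut G g x) = x"
      "\<forall>x\<in>carrier G. conj_aut G g (conj_aut G (inv g) x) = x"
      using g by (simp_all add: conj_aut_def m_assoc)
  qed (use g in \<open>auto simp: conj_aut_def\<close>)
  ultimately show ?thesis
    using g by (simp add: auto_def Bij_def conj_aut_def)
qed

lemma auto_group_hom: "\<phi> \<in> auto G \<Longrightarrow> group_hom G G \<phi>"
  by (simp add: auto_def group_hom_def group_hom_axioms_def)

lemma auto_bij: "\<phi> \<in> auto G \<Longrightarrow> bij_betw \<phi> (carrier G) (carrier G)"
  by (simp add: auto_def Bij_def)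

lemma nat_pow_eq_nat_pow_iff:
  "x \<in> carrier G \<Longrightarrow> x [^] (i::nat) = x [^] (j::nat) \<longleftrightarrow> int (ord x) dvd int j - int i"
  by (metis int_pow_eq int_pow_int)

lemma conj_aut_eq_imp_center:
  assumes "p \<in> carrier G" "q \<in> carrier G" "conj_aut G p = conj_aut G q"
  shows "q \<otimes> inv p \<in> group_center G"
  unfolding group_center_def
proof safe
  fix z assume z: "z \<in> carrier G"
  have "inv p \<otimes> z \<otimes> p = inv q \<otimes> z \<otimes> q"
    using fun_cong[OF assms(3), of z] z by (simp add: conj_aut_def)
  then have "q \<otimes> (inv p \<otimes> z \<otimes> p) \<otimes> inv p = q \<otimes> (inv q \<otimes> z \<otimes> q) \<otimes> inv p"
    by simp
  then show "q \<otimes> inv p \<otimes> z = z \<otimes> (q \<otimes> inv p)"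
    using assms z by (simp add: m_assoc)
qed (use assms in simp)

lemma inj_on_conj_aut:
  assumes "subgroup H G" "H \<inter> group_center G = {\<one>}"
  shows "inj_on (conj_aut G) H"
proof
  fix p q assume p: "p \<in> H" and q: "q \<in> H" and eq: "conj_aut G p = conj_aut G q"
  have pq: "p \<in> carrier G" "q \<in> carrier G"
    using p q subgroup.subset[OF assms(1)] by auto
  have "q \<otimes> inv p \<in> H"
    using p q assms(1) by (simp add: subgroup.m_closed subgroup.m_inv_closed)
  then have "q \<otimes> inv p = \<one>"
    using conj_aut_eq_imp_center[OF pq eq] assms(2) by blast
  then show "p = q"
    using pq by (metis inv_equality inv_inv inv_closed)
qed

lemma auto_compose_conj_aut:
  assumes "\<phi> \<in> auto G" "s \<in> carrier G"
  shows "compose (carrier G) \<phi> (conj_aut G s) = compose (carrier G) (conj_aut G (\<phi> s)) \<phi>"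
proof -
  interpret \<phi>: group_hom G G \<phi>
    using assms(1) by (rule auto_group_hom)
  show ?thesis
    using assms(2) by (intro ext) (simp add: compose_def conj_aut_def)
qed

lemma subgroup_nat_pow_closed:
  assumes "subgroup H G" "x \<in> H"
  shows "x [^] (n::nat) \<in> H"
  using assms by (induction n) (simp_all add: subgroup.one_closed subgroup.m_closed)

lemma conj_aut_eq_if_compose_auto_eq:
  assumes "\<phi> \<in> auto G" "p \<in> carrier G" "q \<in> carrier G"
    and "compose (carrier G) (conj_aut G p) \<phi> = compose (carrier G) (conj_aut G q) \<phi>"
  shows "conj_aut G p = conj_aut G q"
proof
  fix z
  show "conj_aut G p z = conj_aut G q z"
  proof (cases "z \<in> carrier G")
    case True
    then obtain z0 where z0: "z0 \<in> carrier G" "z = \<phi> z0"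
      using bij_betw_imp_surj_on[OF auto_bij[OF assms(1)]] by (metis imageE)
    have "compose (carrier G) (conj_aut G p) \<phi> z0 = compose (carrier G) (conj_aut G q) \<phi> z0"
      using assms(4) by simp
    then show ?thesis
      using z0 by (simp add: compose_def)
  qed (simp add: conj_aut_def)
qed

lemma characteristic_bij_betw:
  assumes "characteristic G H" "\<phi> \<in> auto G"
  shows "bij_betw \<phi> H H"
  using assms bij_betw_subset[OF auto_bij[OF assms(2)] subgroup.subset]
  by (auto simp: characteristic_def)

lemma cyclic_commute:
  assumes "finite (carrier G)" "c \<in> carrier G" "x \<in> generate G {c}" "y \<in> generate G {c}"
  shows "x \<otimes> y = y \<otimes> x"
  using assms generate_pow_on_finite_carrier[OF assms(1,2)]
  by (auto simp: nat_pow_mult add.commute)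

lemma cyclic_pow_eq:
  assumes "finite (carrier G)" "c \<in> carrier G" "c [^] (m::nat) = c [^] (e::nat)"
    and "x \<in> generate G {c}"
  shows "x [^] m = x [^] e"
proof -
  obtain n :: nat where "x = c [^] n"
    using assms(4) generate_pow_on_finite_carrier[OF assms(1,2)] by blast
  then show ?thesis
    using assms(2,3) by (metis nat_pow_pow mult.commute)
qed

lemma cyclic_hom_is_power:
  assumes "finite (carrier G)" "c \<in> carrier G"
    and closed: "\<forall>x \<in> generate G {c}. \<sigma> x \<in> generate G {c}"
    and mult: "\<forall>x \<in> generate G {c}. \<forall>y \<in> generate G {c}. \<sigma> (x \<otimes> y) = \<sigma> x \<otimes> \<sigma> y"
  shows "\<exists>m::nat. \<forall>x \<in> generate G {c}. \<sigma> x = x [^] m"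
proof -
  have gen: "generate G {c} = {c [^] k | k. k \<in> (UNIV :: nat set)}"
    by (rule generate_pow_on_finite_carrier[OF assms(1,2)])
  have sub: "generate G {c} \<subseteq> carrier G"
    using assms(2) generate_incl by blast
  have c_gen: "c [^] n \<in> generate G {c}" for n :: nat
    using gen by blast
  obtain m :: nat where m: "\<sigma> c = c [^] m"
    using closed generate.incl[of c "{c}" G] gen by auto
  have "\<sigma> \<one> \<otimes> \<sigma> \<one> = \<sigma> \<one>"
    using mult generate.one[of G "{c}"] by (metis one_closed r_one)
  then have one: "\<sigma> \<one> = \<one>"
    using closed generate.one[of G "{c}"] sub by auto
  have "\<sigma> (c [^] n) = (c [^] n) [^] m" for n :: nat
  proof (induction n)
    case (Suc n)
    have "\<sigma> (c [^] Suc n) = \<sigma> (c [^] n) \<otimes> \<sigma> c"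
      using mult c_gen[of n] c_gen[of 1] assms(2) by simp
    also have "\<dots> = c [^] (n * m + m)"
      using Suc assms(2) m by (simp add: nat_pow_pow nat_pow_mult)
    also have "\<dots> = (c [^] Suc n) [^] m"
      using assms(2) by (simp only: nat_pow_pow) (simp add: add.commute)
    finally show ?case .
  qed (simp add: one)
  then show ?thesis
    using gen by auto
qed

lemma cyclic_idempotent_power_cases:
  assumes "finite (carrier G)" "c \<in> carrier G" "Factorial_Ring.prime r" "ord c = r ^ k"
    and "(c [^] m) [^] m = c [^] (m::nat)"
  shows "(\<forall>x \<in> generate G {c}. x [^] m = \<one>) \<or> (\<forall>x \<in> generate G {c}. x [^] m = x)"
proof -
  have "int (ord c) dvd int m - int (m * m)"
    using assms(5) nat_pow_eq_nat_pow_iff[OF assms(2)] assms(2) by (simp add: nat_pow_pow)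
  moreover have "int m - int (m * m) = - (int m * (int m - 1))"
    by (simp add: algebra_simps)
  ultimately have "int r ^ k dvd int m * (int m - 1)"
    using assms(4) by simp
  then consider "ord c dvd m" | "int (ord c) dvd int m - int 1"
    using prime_power_dvd_consecutive_product[OF assms(3)] assms(4)
    by (metis of_nat_dvd_iff of_nat_power of_nat_1)
  then show ?thesis
  proof cases
    case 1
    then have "c [^] m = c [^] (0::nat)"
      using pow_eq_id[OF assms(2)] by simp
    then have "\<forall>x \<in> generate G {c}. x [^] m = x [^] (0::nat)"
      using cyclic_pow_eq[OF assms(1,2)] by blast
    then show ?thesis
      by simp
  next
    case 2
    then have "c [^] (1::nat) = c [^] m"
      using nat_pow_eq_nat_pow_iff[OF assms(2), of 1 m] by blast
    then have "\<forall>x \<in> generate G {c}. x [^] m = x [^] (1::nat)"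
      using cyclic_pow_eq[OF assms(1,2) sym] by blast
    moreover have "generate G {c} \<subseteq> carrier G"
      using generate_incl assms(2) by blast
    ultimately show ?thesis
      by auto
  qed
qed

lemma conj_aut_nat_pow_apply:
  assumes "a \<in> carrier G" "c \<in> carrier G" "conj_aut G a c = c [^] (t::nat)"
  shows "conj_aut G (a [^] (n::nat)) c = c [^] (t ^ n)"
proof (induction n)
  case 0
  then show ?case
    using assms(2) by (simp add: conj_aut_one id_aut_def)
next
  case (Suc n)
  interpret conj: group_hom G G "conj_aut G a"
    using conj_aut_in_auto[OF assms(1)] by (rule auto_group_hom)
  have "conj_aut G (a [^] Suc n) c = conj_aut G a (conj_aut G (a [^] n) c)"
    using fun_cong[OF conj_aut_compose[of "a [^] n" a], of c] assms(1,2)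
    by (simp add: compose_def)
  also have "\<dots> = c [^] (t ^ Suc n)"
    using Suc assms by (simp add: conj.hom_nat_pow nat_pow_pow)
  finally show ?case .
qed

lemma restrict_conj_aut_pow_BijGroup:
  assumes "a \<in> carrier G" "H \<subseteq> carrier G" "bij_betw (conj_aut G a) H H"
  shows "restrict (conj_aut G a) H [^]\<^bsub>BijGroup H\<^esub> (n::nat) = restrict (conj_aut G (a [^] n)) H"
proof (induction n)
  case 0
  then show ?case
    using assms(2) by (auto simp: BijGroup_def conj_aut_one id_aut_def fun_eq_iff)
next
  case (Suc n)
  interpret B: group "BijGroup H"
    by (rule group_BijGroup)
  have f: "restrict (conj_aut G a) H \<in> carrier (BijGroup H)"
    using assms(3) by (simp add: BijGroup_def Bij_def)
  have pow_n: "restrict (conj_aut G (a [^] n)) H \<in> carrier (BijGroup H)"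
    using B.nat_pow_closed[OF f, of n] unfolding Suc.IH .
  have "restrict (conj_aut G a) H [^]\<^bsub>BijGroup H\<^esub> Suc n
      = restrict (conj_aut G (a [^] n)) H \<otimes>\<^bsub>BijGroup H\<^esub> restrict (conj_aut G a) H"
    by (simp only: B.nat_pow_Suc Suc.IH)
  also have "\<dots> = compose H (restrict (conj_aut G (a [^] n)) H) (restrict (conj_aut G a) H)"
    using f pow_n by (simp add: BijGroup_def)
  also have "\<dots> = restrict (conj_aut G (a [^] Suc n)) H"
  proof
    fix x
    show "compose H (restrict (conj_aut G (a [^] n)) H) (restrict (conj_aut G a) H) x
        = restrict (conj_aut G (a [^] Suc n)) H x"
    proof (cases "x \<in> H")
      case True
      then have "x \<in> carrier G" "conj_aut G a x \<in> H"
        using assms bij_betwE by blast+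
      then show ?thesis
        using True fun_cong[OF conj_aut_compose[of a "a [^] n"], of x] assms(1)
        by (simp add: compose_def flip: nat_pow_Suc2)
    qed (simp add: compose_def)
  qed
  finally show ?case .
qed

lemma conj_aut_fixed_point_imp_dvd:
  assumes "Factorial_Ring.prime r" "c \<in> carrier G" "ord c = r ^ k" "a \<in> carrier G"
    and "conj_aut G a c = c [^] (t::nat)"
    and "c [^] (j::nat) \<noteq> \<one>" "conj_aut G a (c [^] j) = c [^] j"
  shows "int r dvd int t - 1"
proof (rule ccontr)
  assume not_dvd: "\<not> int r dvd int t - 1"
  interpret conj: group_hom G G "conj_aut G a"
    using conj_aut_in_auto[OF assms(4)] by (rule auto_group_hom)
  have "c [^] (t * j) = c [^] j"
    using assms(2,5,7) by (simp add: conj.hom_nat_pow nat_pow_pow)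
  then have "int r ^ k dvd int j * (1 - int t)"
    using nat_pow_eq_nat_pow_iff[OF assms(2)] assms(3) by (simp add: algebra_simps)
  moreover have "coprime (int r ^ k) (1 - int t)"
    using not_dvd assms(1) by (simp add: prime_imp_coprime dvd_diff_commute)
  ultimately have "int r ^ k dvd int j"
    by (simp add: coprime_dvd_mult_left_iff)
  then have "c [^] j = \<one>"
    using pow_eq_id[OF assms(2)] assms(3) by (metis of_nat_dvd_iff of_nat_power)
  with assms(6) show False ..
qed

lemma ord_restrict_conj_aut_prime_power:
  assumes "finite (carrier G)" "Factorial_Ring.prime r" "c \<in> carrier G" "ord c = r ^ k"
    and "a \<in> carrier G" "bij_betw (conj_aut G a) (generate G {c}) (generate G {c})"
    and "w \<in> generate G {c}" "w \<noteq> \<one>" "conj_aut G a w = w"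
  shows "\<exists>i. group.ord (BijGroup (generate G {c})) (restrict (conj_aut G a) (generate G {c})) = r ^ i"
proof -
  define C where "C = generate G {c}"
  define f where "f = restrict (conj_aut G a) C"
  interpret B: group "BijGroup C"
    by (rule group_BijGroup)
  have gen: "C = {c [^] n | n. n \<in> (UNIV :: nat set)}"
    unfolding C_def by (rule generate_pow_on_finite_carrier[OF assms(1,3)])
  have sub: "C \<subseteq> carrier G"
    using assms(3) generate_incl unfolding C_def by blast
  obtain t :: nat where t: "conj_aut G a c = c [^] t"
    using assms(6) gen bij_betwE[OF assms(6)] generate.incl[of c "{c}" G] unfolding C_def by blast
  obtain j :: nat where j: "w = c [^] j"
    using assms(7) gen unfolding C_def by blast
  have "int r dvd int t - 1"
    using conj_aut_fixed_point_imp_dvd[OF assms(2-5) t] assms(8,9) j by simp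
  then have "int r ^ k dvd int (t ^ r ^ k) - 1"
    using power_dvd_power_power_sub_one[of r "int t" k] by (simp add: dvd_mult_right)
  then have "c [^] (t ^ r ^ k) = c"
    using nat_pow_eq_nat_pow_iff[OF assms(3), of 1 "t ^ r ^ k"] assms(3,4) by simp
  then have fixes_c: "conj_aut G (a [^] r ^ k) c = c"
    using conj_aut_nat_pow_apply[OF assms(5,3) t] by simp
  interpret conj_pow: group_hom G G "conj_aut G (a [^] r ^ k)"
    using conj_aut_in_auto assms(5) by (simp add: auto_group_hom)
  have "f [^]\<^bsub>BijGroup C\<^esub> r ^ k = restrict (conj_aut G (a [^] r ^ k)) C"
    unfolding f_def C_def using restrict_conj_aut_pow_BijGroup assms(5,6) sub C_def by simp
  also have "\<dots> = \<one>\<^bsub>BijGroup C\<^esub>"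
    using gen assms(3) fixes_c by (auto simp: BijGroup_def conj_pow.hom_nat_pow fun_eq_iff)
  finally have "B.ord f dvd r ^ k"
    using B.pow_eq_id assms(6) unfolding f_def C_def by (simp add: BijGroup_def Bij_def)
  then show ?thesis
    using divides_primepow_nat[OF assms(2)] unfolding f_def C_def by blast
qed

lemma gamma_conj_form_mult:
  assumes gamma: "gamma_function G \<gamma>" and C: "subgroup C G" and inj: "inj_on (conj_aut G) C"
    and comm: "\<forall>x \<in> C. \<forall>y \<in> C. x \<otimes> y = y \<otimes> x"
    and closed: "\<forall>x \<in> C. \<sigma> x \<in> C" and form: "\<forall>x \<in> C. \<gamma> x = conj_aut G (inv (\<sigma> x))"
    and x: "x \<in> C" and y: "y \<in> C"
  shows "\<sigma> (x \<otimes> y) = \<sigma> x \<otimes> \<sigma> y"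
proof -
  have G: "x \<in> carrier G" "y \<in> carrier G" "\<sigma> x \<in> carrier G" "\<sigma> y \<in> carrier G"
    using x y closed subgroup.subset[OF C] by auto
  have "\<gamma> y x = x"
    using form y G comm x closed by (simp add: conj_aut_def m_assoc)
  then have "\<gamma> (x \<otimes> y) = aut_mult G (\<gamma> x) (\<gamma> y)"
    using gamma G unfolding gamma_function_def by metis
  also have "\<dots> = conj_aut G (inv (\<sigma> x) \<otimes> inv (\<sigma> y))"
    using form x y G by (simp add: aut_mult_def conj_aut_compose)
  finally have "inv (\<sigma> (x \<otimes> y)) = inv (\<sigma> x) \<otimes> inv (\<sigma> y)"
    using inj form x y closed C
    by (simp add: inj_on_eq_iff subgroup.m_closed subgroup.m_inv_closed)
  also have "\<dots> = inv (\<sigma> x \<otimes> \<sigma> y)"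
    using G comm x y closed inv_mult_group[of "\<sigma> y" "\<sigma> x"] by simp
  finally show ?thesis
    using closed x y C G subgroup.subset[OF C] by (metis inv_inv m_closed subgroup.m_closed subsetD)
qed

lemma gamma_conj_form_transport:
  assumes gamma: "gamma_function G \<gamma>" and char: "characteristic G C"
    and inj: "inj_on (conj_aut G) C"
    and closed: "\<forall>x \<in> C. \<sigma> x \<in> C" and form: "\<forall>x \<in> C. \<gamma> x = conj_aut G (inv (\<sigma> x))"
    and a: "a \<in> carrier G" and x: "x \<in> C" and x': "x' \<in> C"
    and eq: "\<gamma> x a \<otimes> x = \<gamma> a x' \<otimes> a"
  shows "\<sigma> x = \<gamma> a (\<sigma> x')"
proof -
  have sub: "C \<subseteq> carrier G"
    using char subgroup.subset by (auto simp: characteristic_def)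
  have aut: "\<gamma> a \<in> auto G"
    using gamma a by (simp add: gamma_function_def)
  interpret \<gamma>a: group_hom G G "\<gamma> a"
    using aut by (rule auto_group_hom)
  have s: "\<sigma> x \<in> C" "\<sigma> x' \<in> C" "\<gamma> a (\<sigma> x') \<in> C"
    using closed x x' bij_betwE[OF characteristic_bij_betw[OF char aut]] by auto
  have "compose (carrier G) (\<gamma> x) (\<gamma> a) = \<gamma> (\<gamma> x a \<otimes> x)"
    using gamma a x sub by (auto simp: gamma_function_def aut_mult_def)
  also have "\<dots> = compose (carrier G) (\<gamma> a) (\<gamma> x')"
    unfolding eq using gamma a x' sub by (auto simp: gamma_function_def aut_mult_def)
  also have "\<dots> = compose (carrier G) (conj_aut G (inv (\<gamma> a (\<sigma> x')))) (\<gamma> a)"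
    using auto_compose_conj_aut[OF aut, of "inv (\<sigma> x')"] form x' s sub by auto
  finally have "conj_aut G (inv (\<sigma> x)) = conj_aut G (inv (\<gamma> a (\<sigma> x')))"
    using conj_aut_eq_if_compose_auto_eq[OF aut] form x s sub by (simp add: subsetD)
  then have "inv (\<sigma> x) = inv (\<gamma> a (\<sigma> x'))"
    using inj s char by (simp add: inj_on_eq_iff characteristic_def subgroup.m_inv_closed)
  then show ?thesis
    using s sub by (metis inv_inv subsetD)
qed

lemma gamma_power_form_idempotent:
  assumes gamma: "gamma_function G \<gamma>" and char: "characteristic G C"
    and inj: "inj_on (conj_aut G) C" and comm: "\<forall>x \<in> C. \<forall>y \<in> C. x \<otimes> y = y \<otimes> x"
    and a: "a \<in> carrier G" and fixed_point_free: "\<forall>w \<in> C. conj_aut G a w = w \<longrightarrow> w = \<one>"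
    and form: "\<forall>x \<in> C. \<gamma> x = conj_aut G (inv (x [^] (m::nat)))"
    and x: "x \<in> C"
  shows "(x [^] m) [^] m = x [^] m"
proof -
  have C: "subgroup C G"
    using char by (simp add: characteristic_def)
  have sub: "C \<subseteq> carrier G"
    using C subgroup.subset by blast
  have auts: "\<gamma> a \<in> auto G" "conj_aut G (inv a) \<in> auto G"
    using gamma a by (simp_all add: gamma_function_def conj_aut_in_auto)
  interpret \<gamma>a: group_hom G G "\<gamma> a"
    using auts(1) by (rule auto_group_hom)
  interpret conj: group_hom G G "conj_aut G (inv a)"
    using auts(2) by (rule auto_group_hom)
  define y where "y = x [^] m"
  define w where "w = inv y \<otimes> x"
  define w' where "w' = conj_aut G (inv a) w"
  define v where "v = inv (y [^] m) \<otimes> y"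
  have yC: "y \<in> C" and wC: "w \<in> C" and vC: "v \<in> C"
    using x C subgroup_nat_pow_closed[OF C] unfolding y_def w_def v_def
    by (simp_all add: subgroup.m_closed subgroup.m_inv_closed)
  have w'C: "w' \<in> C"
    using bij_betwE[OF characteristic_bij_betw[OF char auts(2)]] wC unfolding w'_def by blast
  have G: "x \<in> carrier G" "y \<in> carrier G" "w \<in> carrier G" "w' \<in> carrier G" "v \<in> carrier G"
    using x yC wC w'C vC sub by auto
  obtain x' where x': "x' \<in> C" "\<gamma> a x' = y \<otimes> w'"
    using bij_betw_imp_surj_on[OF characteristic_bij_betw[OF char auts(1)]] yC w'C C
    by (metis imageE subgroup.m_closed)
  have "\<gamma> x a \<otimes> x = (y \<otimes> w') \<otimes> a"
    using form x a G unfolding w'_def w_def y_def by (simp add: conj_aut_def m_assoc)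
  then have "y = \<gamma> a (x' [^] m)"
    using gamma_conj_form_transport[OF gamma char inj _ _ a x x'(1), of "\<lambda>x. x [^] m"]
      form x' subgroup_nat_pow_closed[OF C] by (simp add: y_def)
  also have "\<dots> = (y \<otimes> w') [^] m"
    using x' sub by (simp add: \<gamma>a.hom_nat_pow subsetD)
  also have "\<dots> = y [^] m \<otimes> conj_aut G (inv a) (w [^] m)"
    using pow_mult_distrib[of y w' m] comm yC w'C G by (simp add: w'_def conj.hom_nat_pow)
  also have "w [^] m = v"
    using pow_mult_distrib[of "inv y" x m] comm yC x G C
    by (simp add: w_def v_def y_def nat_pow_inv subgroup.m_inv_closed)
  finally have "y [^] m \<otimes> v = y [^] m \<otimes> conj_aut G (inv a) v"
    using G by (simp add: v_def)
  then have "conj_aut G (inv a) v = v"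
    using G by simp
  then have "conj_aut G a v = v"
    using fun_cong[OF conj_aut_compose[of "inv a" a], of v] a G
    by (simp add: compose_def conj_aut_one id_aut_def)
  then have "v = \<one>"
    using fixed_point_free vC by blast
  then show ?thesis
    using G unfolding v_def y_def by (metis inv_equality inv_inv nat_pow_closed inv_closed)
qed

lemma gamma_tilde_eq_id_aut:
  assumes "subgroup C G" "\<forall>x \<in> C. \<gamma> x = conj_aut G (inv x)" "x \<in> C"
  shows "gamma_tilde G \<gamma> x = id_aut G"
proof -
  have "x \<in> carrier G" "inv x \<in> C"
    using assms by (auto simp: subgroup.m_inv_closed subgroup.mem_carrier)
  then show ?thesis
    using assms(2) by (simp add: gamma_tilde_def aut_mult_def conj_aut_compose conj_aut_one)
qed

end

theorem mainTheorem11: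
  fixes G (structure) and C :: "'a set" and c a :: 'a and r :: nat
    and \<gamma> :: "'a \<Rightarrow> ('a \<Rightarrow> 'a)" and \<sigma> :: "'a \<Rightarrow> 'a"
  assumes "group G" and "finite (carrier G)"
    and "\<exists>x \<in> carrier G. \<exists>y \<in> carrier G. x \<otimes> y \<noteq> y \<otimes> x"
    and "c \<in> carrier G" and "C = generate G {c}"
    and "Factorial_Ring.prime r" and "\<exists>k. card C = r ^ k"
    and "characteristic G C"
    and "C \<inter> group_center G = {\<one>}"
    and "a \<in> carrier G"
    and "\<not> (\<exists>k. group.ord (BijGroup C) (restrict (conj_aut G a) C) = r ^ k)"
    and "gamma_function G \<gamma>"
    and "\<forall>x \<in> C. \<sigma> x \<in> C"
    and "\<forall>x \<in> C. \<gamma> x = conj_aut G (inv (\<sigma> x))"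
  shows "(\<forall>x \<in> C. \<gamma> x = id_aut G) \<or>
         ((\<forall>x \<in> C. \<gamma> x = conj_aut G (inv x)) \<and>
          (\<forall>x \<in> C. gamma_tilde G \<gamma> x = id_aut G))"
proof -
  interpret group G by fact
  have C: "subgroup C G"
    using assms(8) by (simp add: characteristic_def)
  have comm: "\<forall>x \<in> C. \<forall>y \<in> C. x \<otimes> y = y \<otimes> x"
    using cyclic_commute[OF assms(2,4)] assms(5) by blast
  have inj: "inj_on (conj_aut G) C"
    using inj_on_conj_aut[OF C assms(9)] .
  have "\<forall>x \<in> C. \<forall>y \<in> C. \<sigma> (x \<otimes> y) = \<sigma> x \<otimes> \<sigma> y"
    using gamma_conj_form_mult[OF assms(12) C inj comm assms(13,14)] by blast
  then have "\<exists>m::nat. \<forall>x \<in> C. \<sigma> x = x [^] m"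
    using cyclic_hom_is_power[OF assms(2,4), of \<sigma>] assms(5,13) by simp
  then obtain m :: nat where "\<forall>x \<in> C. \<sigma> x = x [^] m" ..
  then have form: "\<forall>x \<in> C. \<gamma> x = conj_aut G (inv (x [^] m))"
    using assms(14) by simp
  obtain k where ord_c: "ord c = r ^ k"
    using assms(5,7) generate_pow_card[OF assms(4)] by auto
  have "\<forall>w \<in> C. conj_aut G a w = w \<longrightarrow> w = \<one>"
    using ord_restrict_conj_aut_prime_power[OF assms(2,6,4) ord_c assms(10)] assms(11)
      characteristic_bij_betw[OF assms(8) conj_aut_in_auto[OF assms(10)]]
    unfolding assms(5) by blast
  then have "(c [^] m) [^] m = c [^] m"
    using gamma_power_form_idempotent[OF assms(12,8) inj comm assms(10) _ form]
      assms(5) generate.incl[of c "{c}" G] by blast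
  then consider "\<forall>x \<in> C. x [^] m = \<one>" | "\<forall>x \<in> C. x [^] m = x"
    using cyclic_idempotent_power_cases[OF assms(2,4,6) ord_c] assms(5) by blast
  then show ?thesis
  proof cases
    case 1
    then show ?thesis
      using form by (simp add: conj_aut_one)
  next
    case 2
    then have "\<forall>x \<in> C. \<gamma> x = conj_aut G (inv x)"
      using form by simp
    then show ?thesis
      using gamma_tilde_eq_id_aut[OF C] by blast
  qed
qed

end
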